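(* Let $H_1,H_2$ be separable Hilbert spaces, $K\in B(H_1)$, $L\in B(H_2)$. Let $\{x_n\}_{n\geqslant1}$ be a $K$-frame for $H_1$ and $\{y_n\}_{n\geqslant1}$ an $L$-frame for $H_2$, with analysis operators $\theta_1$ and $\theta_2$ respectively. If $\overline{R(\theta_1)}=R(\theta_2)^\perp$ in $\ell^2$, then $\{x_n\oplus y_n\}_{n\geqslant1}$ is a $K\oplus L$-minimal frame for $H_1\oplus H_2$.
   Context: $H_1\oplus H_2$ is the Hilbert space of pairs $x\oplus y$ with inner product $\langle x\oplus y,a\oplus b\rangle=\langle x,a\rangle+\langle y,b\rangle$; $(K\oplus L)(x\oplus y)=K(x)\oplus L(y)$. For a Hilbert space $H$ and $K\in B(H)$, $\{z_n\}_{n\geqslant1}$ is a $K$-frame if there are $A,B>0$ with $A\|K^*z\|^2\leq\sum_n|\langle z,z_n\rangle|^2\leq B\|z\|^2$ for all $z\in H$. Its analysis operator is $\theta:H\to\ell^2$, $\theta(z)=\{\langle z,z_n\rangle\}_n$, and its synthesis operator is $T=\theta^*:\ell^2\to H$, $T(\{a_n\})=\sum_na_nz_n$. A $K$-frame is $K$-minimal if its synthesis operator is injective. $R(\cdot)$ denotes range. *)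

theory Defs
  imports "HOL-Analysis.Analysis"
begin

text \<open>Complex Hilbert spaces are encoded via realification: a complex Hilbert space
is a real Hilbert space (type class real_inner + complete_space) together with a
complex structure J (multiplication by the imaginary unit), which is real-linear,
satisfies J (J x) = - x and is orthogonal.  The complex inner product is
linear in the first argument.\<close>

definition cstruct :: "('a::real_inner \<Rightarrow> 'a) \<Rightarrow> bool" where
  "cstruct J \<longleftrightarrow> linear J \<and> (\<forall>x. J (J x) = - x) \<and> (\<forall>x y. inner (J x) (J y) = inner x y)"

definition cscale :: "('a::real_vector \<Rightarrow> 'a) \<Rightarrow> complex \<Rightarrow> 'a \<Rightarrow> 'a" where
  "cscale J c v = Re c *\<^sub>R v + Im c *\<^sub>R J v"

definition cinner :: "('a::real_inner \<Rightarrow> 'a) \<Rightarrow> 'a \<Rightarrow> 'a \<Rightarrow> complex" where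
  "cinner J x y = Complex (inner x y) (- inner (J x) y)"

text \<open>bounded complex-linear operators, i.e. elements of B(H)\<close>
definition cbounded :: "('a::real_inner \<Rightarrow> 'a) \<Rightarrow> ('a \<Rightarrow> 'a) \<Rightarrow> bool" where
  "cbounded J K \<longleftrightarrow> bounded_linear K \<and> (\<forall>x. K (J x) = J (K x))"

definition hadj :: "('a::real_inner \<Rightarrow> 'a) \<Rightarrow> ('a \<Rightarrow> 'a) \<Rightarrow> ('a \<Rightarrow> 'a)" where
  "hadj J K = (THE A. \<forall>x y. cinner J (K x) y = cinner J x (A y))"

definition l2 :: "(nat \<Rightarrow> complex) set" where
  "l2 = {a. summable (\<lambda>n. (cmod (a n))\<^sup>2)}"

definition l2_inner :: "(nat \<Rightarrow> complex) \<Rightarrow> (nat \<Rightarrow> complex) \<Rightarrow> complex" where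
  "l2_inner a b = (\<Sum>n. a n * cnj (b n))"

definition l2_norm :: "(nat \<Rightarrow> complex) \<Rightarrow> real" where
  "l2_norm a = sqrt (\<Sum>n. (cmod (a n))\<^sup>2)"

definition l2_closure :: "(nat \<Rightarrow> complex) set \<Rightarrow> (nat \<Rightarrow> complex) set" where
  "l2_closure S = {b \<in> l2. \<forall>e>0. \<exists>a\<in>S. l2_norm (\<lambda>n. a n - b n) < e}"

definition l2_orth :: "(nat \<Rightarrow> complex) set \<Rightarrow> (nat \<Rightarrow> complex) set" where
  "l2_orth S = {b \<in> l2. \<forall>a\<in>S. l2_inner a b = 0}"

definition analysis_op :: "('a::real_inner \<Rightarrow> 'a) \<Rightarrow> (nat \<Rightarrow> 'a) \<Rightarrow> 'a \<Rightarrow> (nat \<Rightarrow> complex)" where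
  "analysis_op J z x = (\<lambda>n. cinner J x (z n))"

definition synthesis_op :: "('a::real_inner \<Rightarrow> 'a) \<Rightarrow> (nat \<Rightarrow> 'a) \<Rightarrow> (nat \<Rightarrow> complex) \<Rightarrow> 'a" where
  "synthesis_op J z a = (\<Sum>n. cscale J (a n) (z n))"

definition kframe :: "('a::real_inner \<Rightarrow> 'a) \<Rightarrow> ('a \<Rightarrow> 'a) \<Rightarrow> (nat \<Rightarrow> 'a) \<Rightarrow> bool" where
  "kframe J K z \<longleftrightarrow> (\<exists>A B. A > 0 \<and> B > 0 \<and>
     (\<forall>x. summable (\<lambda>n. (cmod (cinner J x (z n)))\<^sup>2) \<and>
          A * (norm (hadj J K x))\<^sup>2 \<le> (\<Sum>n. (cmod (cinner J x (z n)))\<^sup>2) \<and>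
          (\<Sum>n. (cmod (cinner J x (z n)))\<^sup>2) \<le> B * (norm x)\<^sup>2))"

definition kminimal :: "('a::real_inner \<Rightarrow> 'a) \<Rightarrow> ('a \<Rightarrow> 'a) \<Rightarrow> (nat \<Rightarrow> 'a) \<Rightarrow> bool" where
  "kminimal J K z \<longleftrightarrow> kframe J K z \<and> inj_on (synthesis_op J z) l2"

text \<open>direct sums: the library's product type carries the inner product
(x,y) \<bullet> (a,b) = x \<bullet> a + y \<bullet> b\<close>
definition dsum_op :: "('a \<Rightarrow> 'a) \<Rightarrow> ('b \<Rightarrow> 'b) \<Rightarrow> ('a \<times> 'b \<Rightarrow> 'a \<times> 'b)" where
  "dsum_op K L = (\<lambda>(x, y). (K x, L y))"

end

theory Submission
  imports Defs
begin

(* The analysis operator of (x\<^sub>n \<oplus> y\<^sub>n) sends p \<oplus> q to \<theta>\<^sub>1 p + \<theta>\<^sub>2 q.  Since R(\<theta>\<^sub>1) is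
   orthogonal to R(\<theta>\<^sub>2), Pythagoras splits the norm of this sequence into those of \<theta>\<^sub>1 p and
   \<theta>\<^sub>2 q, and as (K \<oplus> L)\<^sup>* = K\<^sup>* \<oplus> L\<^sup>* the two frame inequalities simply add up.
   The synthesis operator sends a to T\<^sub>1 a \<oplus> T\<^sub>2 a, where T\<^sub>i = \<theta>\<^sub>i\<^sup>*.  So T a = 0 makes a
   orthogonal to R(\<theta>\<^sub>1) while lying in R(\<theta>\<^sub>2)\<^sup>\<bottom>, the closure of R(\<theta>\<^sub>1); hence a = 0.
   The adjoints K\<^sup>*, L\<^sup>* exist by the Riesz representation theorem, which we obtain by showing
   that a bounded functional attains its norm on the unit ball of a Hilbert space: by the
   parallelogram law, maximizing sequences are Cauchy. *)

lemma linear_coeff_eq_0_if_quadratic_bound: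
  fixes a b :: real
  assumes "\<And>t. a * t \<le> t\<^sup>2 * b"
  shows "a = 0"
proof -
  define c where "c = \<bar>b\<bar> + 1"
  have c: "c > 0" "b \<le> c - 1" by (auto simp: c_def)
  have "a * (a / c) \<le> (a / c)\<^sup>2 * b" by (rule assms)
  also have "\<dots> \<le> (a / c)\<^sup>2 * (c - 1)" using c by (intro mult_left_mono) auto
  finally have "a\<^sup>2 * c \<le> a\<^sup>2 * (c - 1)"
    using c by (simp add: power2_eq_square field_simps)
  hence "a\<^sup>2 \<le> 0" by (simp add: algebra_simps)
  thus ?thesis by simp
qed

lemma onorm_approx_on_unit_ball:
  fixes f :: "'a::real_normed_vector \<Rightarrow> real"
  assumes "bounded_linear f" and "e > 0"
  shows "\<exists>z. norm z \<le> 1 \<and> onorm f - e < f z"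
proof (rule ccontr)
  interpret f: bounded_linear f by fact
  assume "\<not> ?thesis"
  hence le: "f z \<le> onorm f - e" if "norm z \<le> 1" for z
    using that by force
  have "norm (f x) \<le> (onorm f - e) * norm x" for x
  proof (cases "x = 0")
    case False
    have "f (x /\<^sub>R norm x) \<le> onorm f - e" "f (- x /\<^sub>R norm x) \<le> onorm f - e"
      using False by (intro le; simp)+
    thus ?thesis using False
      by (simp add: f.scaleR f.neg abs_le_iff field_simps)
  qed simp
  hence "onorm f \<le> onorm f - e"
    by (rule onorm_bound[rotated]) (use le[of 0] in simp)
  thus False using assms(2) by simp
qed

lemma norm_diff_power2_le_if_norm_add_large:
  fixes a b :: "'a::real_inner"
  assumes "norm a \<le> 1" "norm b \<le> 1" "N > 0" "c \<le> N * norm (a + b)"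
  shows "(norm (a - b))\<^sup>2 \<le> 4 * (2 * N - c) / N"
proof -
  let ?s = "norm (a + b)"
  have "(norm (a - b))\<^sup>2 + ?s\<^sup>2 = 2 * (norm a)\<^sup>2 + 2 * (norm b)\<^sup>2"
    by (simp add: power2_norm_eq_inner algebra_simps inner_commute)
  also have "\<dots> \<le> 4"
    using assms(1,2) power_le_one[of "norm a" 2] power_le_one[of "norm b" 2] by simp
  finally have "(norm (a - b))\<^sup>2 \<le> (2 - ?s) * (2 + ?s)"
    by (simp add: algebra_simps power2_eq_square)
  also have "\<dots> \<le> (2 - ?s) * 4"
    using norm_triangle_le[of a b 2] assms(1,2) by (intro mult_left_mono) auto
  also have "\<dots> \<le> 4 * (2 * N - c) / N"
    using assms(3,4) by (simp add: field_simps)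
  finally show ?thesis .
qed

lemma maximizing_sequence_Cauchy:
  fixes f :: "'a::real_inner \<Rightarrow> real" and z :: "nat \<Rightarrow> 'a"
  assumes f: "bounded_linear f" and N: "N > 0" "\<And>x. f x \<le> N * norm x"
    and z: "\<And>n. norm (z n) \<le> 1" "\<And>n. N - inverse (Suc n) < f (z n)"
  shows "Cauchy z"
proof (rule CauchyI)
  fix e :: real assume "e > 0"
  then obtain M :: nat where M: "inverse (Suc M) < e\<^sup>2 * N / 8"
    using reals_Archimedean N by (metis divide_pos_pos mult_pos_pos zero_less_numeral zero_less_power)
  have "norm (z m - z n) < e" if "M \<le> m" "M \<le> n" for m n
  proof -
    have "inverse (Suc m) \<le> inverse (Suc M)" "inverse (Suc n) \<le> inverse (Suc M)"
      using that by (simp_all add: le_imp_inverse_le)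
    moreover have "f (z m + z n) = f (z m) + f (z n)"
      by (simp add: linear_simps(1)[OF f])
    ultimately have "2 * N - f (z m + z n) \<le> 2 * inverse (Suc M)"
      using z(2)[of m] z(2)[of n] by linarith
    have "(norm (z m - z n))\<^sup>2 \<le> 4 * (2 * N - f (z m + z n)) / N"
      by (rule norm_diff_power2_le_if_norm_add_large[OF z(1) z(1) N(1) N(2)])
    also have "\<dots> \<le> 4 * (2 * inverse (Suc M)) / N"
      using \<open>2 * N - _ \<le> _\<close> N(1) by (intro divide_right_mono) auto
    also have "\<dots> < e\<^sup>2"
      using M by (simp add: pos_divide_less_eq[OF N(1)])
    finally show ?thesis
      using \<open>e > 0\<close> by (simp add: power_less_imp_less_base)
  qed
  thus "\<exists>M. \<forall>m\<ge>M. \<forall>n\<ge>M. norm (z m - z n) < e" by blast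
qed

lemma bounded_linear_attains_onorm:
  fixes f :: "'a::{real_inner, complete_space} \<Rightarrow> real"
  assumes f: "bounded_linear f"
  shows "\<exists>u. norm u \<le> 1 \<and> f u = onorm f"
proof (cases "onorm f = 0")
  case True
  thus ?thesis by (intro exI[of _ 0]) (simp add: linear_simps[OF f])
next
  case False
  hence N: "onorm f > 0" using onorm_pos_le[OF f] by simp
  have bound: "f x \<le> onorm f * norm x" for x
    using onorm[OF f, of x] by simp
  have "\<forall>n. \<exists>z. norm z \<le> 1 \<and> onorm f - inverse (Suc n) < f z"
    using onorm_approx_on_unit_ball[OF f] by simp
  then obtain z where z: "\<And>n. norm (z n) \<le> 1" "\<And>n. onorm f - inverse (Suc n) < f (z n)"
    by metis
  obtain u where u: "z \<longlonglongrightarrow> u"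
    using maximizing_sequence_Cauchy[OF f N bound z] Cauchy_convergent_iff convergent_def by blast
  have "norm u \<le> 1"
    by (rule LIMSEQ_le_const2[OF tendsto_norm[OF u]]) (use z(1) in auto)
  moreover have "onorm f \<le> f u"
  proof (rule LIMSEQ_le[OF _ bounded_linear.tendsto[OF f u]])
    show "(\<lambda>n. onorm f - inverse (Suc n)) \<longlonglongrightarrow> onorm f"
      using tendsto_diff[OF tendsto_const LIMSEQ_inverse_real_of_nat] by simp
  qed (use z(2) less_imp_le in auto)
  moreover have "f u \<le> onorm f"
    using bound[of u] \<open>norm u \<le> 1\<close> N mult_left_le[of "norm u" "onorm f"] by linarith
  ultimately show ?thesis by auto
qed

lemma bounded_linear_eq_onorm_inner:
  fixes f :: "'a::real_inner \<Rightarrow> real"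
  assumes f: "bounded_linear f" and u: "norm u \<le> 1" "f u = onorm f"
  shows "f x = onorm f * inner u x"
proof -
  let ?N = "onorm f"
  (* As \<parallel>u\<parallel> \<le> 1 and f (u + t x) \<le> N \<parallel>u + t x\<parallel>, the quadratic
     N\<^sup>2 (1 + 2 t \<langle>u, x\<rangle> + t\<^sup>2 \<parallel>x\<parallel>\<^sup>2) - (N + t f x)\<^sup>2 is nonnegative and vanishes at t = 0,
     so its linear coefficient vanishes. *)
  have "(2 * ?N * f x - 2 * ?N\<^sup>2 * inner u x) * t \<le> t\<^sup>2 * (?N\<^sup>2 * (norm x)\<^sup>2 - (f x)\<^sup>2)" for t
  proof -
    have "(?N + t * f x)\<^sup>2 = (f (u + t *\<^sub>R x))\<^sup>2"
      using u by (simp add: linear_simps[OF f])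
    also have "\<dots> \<le> (?N * norm (u + t *\<^sub>R x))\<^sup>2"
      using onorm[OF f, of "u + t *\<^sub>R x"] onorm_pos_le[OF f]
      by (simp add: abs_le_square_iff[symmetric] abs_mult)
    also have "\<dots> = ?N\<^sup>2 * ((norm u)\<^sup>2 + 2 * t * inner u x + t\<^sup>2 * (norm x)\<^sup>2)"
      unfolding power_mult_distrib power2_norm_eq_inner
      by (simp add: inner_add_left inner_add_right inner_commute algebra_simps power2_eq_square)
    also have "\<dots> \<le> ?N\<^sup>2 * (1 + 2 * t * inner u x + t\<^sup>2 * (norm x)\<^sup>2)"
      using u(1) by (intro mult_left_mono) (auto simp: power_le_one)
    finally show ?thesis by (simp add: algebra_simps power2_eq_square)
  qed
  hence "2 * ?N * f x - 2 * ?N\<^sup>2 * inner u x = 0"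
    by (rule linear_coeff_eq_0_if_quadratic_bound)
  moreover have "?N = 0 \<Longrightarrow> f x = 0"
    using onorm_eq_0[OF f] by simp
  ultimately show ?thesis by (cases "?N = 0") (simp_all add: power2_eq_square)
qed

lemma riesz_representation:
  fixes f :: "'a::{real_inner, complete_space} \<Rightarrow> real"
  assumes "bounded_linear f"
  shows "\<exists>v. \<forall>x. f x = inner x v"
proof -
  obtain u where "norm u \<le> 1" "f u = onorm f"
    using bounded_linear_attains_onorm[OF assms] by blast
  hence "f x = inner x (onorm f *\<^sub>R u)" for x
    using bounded_linear_eq_onorm_inner[OF assms] by (simp add: inner_commute)
  thus ?thesis by blast
qed

lemma bounded_linear_has_adjoint:
  fixes K :: "'a::{real_inner, complete_space} \<Rightarrow> 'a"
  assumes "bounded_linear K"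
  shows "\<exists>A. \<forall>p q. inner (K p) q = inner p (A q)"
proof -
  have "\<exists>v. \<forall>p. inner (K p) q = inner p v" for q
    using riesz_representation[OF bounded_linear_compose[OF bounded_linear_inner_left assms]] .
  thus ?thesis by metis
qed

lemma hadj_eqI:
  assumes comm: "\<And>x. K (J x) = J (K x)" and adj: "\<And>p q. inner (K p) q = inner p (A q)"
  shows "hadj J K = A"
  unfolding hadj_def
proof (rule the_equality)
  show "\<forall>x y. cinner J (K x) y = cinner J x (A y)"
    by (simp add: cinner_def adj comm[symmetric])
next
  fix B assume "\<forall>x y. cinner J (K x) y = cinner J x (B y)"
  hence "inner x (B y) = inner x (A y)" for x y
    using adj by (metis cinner_def complex.sel(1))
  hence "inner (B y - A y) (B y - A y) = 0" for y
    by (simp add: inner_diff_right)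
  thus "B = A" by auto
qed

lemma hadj_dsum_op:
  fixes J1 K :: "'a::{real_inner, complete_space} \<Rightarrow> 'a"
    and J2 L :: "'b::{real_inner, complete_space} \<Rightarrow> 'b"
  assumes "cbounded J1 K" "cbounded J2 L"
  shows "hadj (dsum_op J1 J2) (dsum_op K L) = dsum_op (hadj J1 K) (hadj J2 L)"
proof -
  obtain A1 where A1: "\<And>p q. inner (K p) q = inner p (A1 q)"
    using bounded_linear_has_adjoint assms(1) unfolding cbounded_def by blast
  obtain A2 where A2: "\<And>p q. inner (L p) q = inner p (A2 q)"
    using bounded_linear_has_adjoint assms(2) unfolding cbounded_def by blast
  have "hadj J1 K = A1" "hadj J2 L = A2"
    using assms by (auto intro!: hadj_eqI A1 A2 simp: cbounded_def)
  moreover have "hadj (dsum_op J1 J2) (dsum_op K L) = dsum_op A1 A2"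
    using assms by (intro hadj_eqI) (auto simp: dsum_op_def cbounded_def A1 A2 split: prod.splits)
  ultimately show ?thesis by simp
qed

lemma cinner_dsum_op:
  "cinner (dsum_op J1 J2) (p, q) (a, b) = cinner J1 p a + cinner J2 q b"
  by (simp add: cinner_def dsum_op_def complex_eq_iff)

lemma cstruct_inner_skew:
  assumes "cstruct J"
  shows "inner (J v) x = - inner v (J x)"
proof -
  have "inner (J v) x = inner (J (J v)) (J x)"
    using assms unfolding cstruct_def by metis
  thus ?thesis using assms by (simp add: cstruct_def)
qed

lemma inner_cscale_left:
  assumes "cstruct J"
  shows "inner (cscale J c x) v = Re (c * cnj (cinner J v x))"
  using cstruct_inner_skew[OF assms, of v x]
  by (simp add: cscale_def cinner_def inner_add_left inner_add_right inner_commute)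

lemma cinner_cstruct_left:
  assumes "cstruct J"
  shows "cinner J (J p) x = \<i> * cinner J p x"
  using assms by (simp add: cstruct_def cinner_def complex_eq_iff)

lemma cscale_diff_left: "cscale J (a - b) v = cscale J a v - cscale J b v"
  by (simp add: cscale_def algebra_simps scaleR_diff_left)

lemma l2_summable: "u \<in> l2 \<Longrightarrow> summable (\<lambda>n. (cmod (u n))\<^sup>2)"
  by (simp add: l2_def)

lemma l2_add:
  assumes "u \<in> l2" "v \<in> l2"
  shows "(\<lambda>n. u n + v n) \<in> l2"
proof -
  have "(cmod (u n + v n))\<^sup>2 \<le> 2 * (cmod (u n))\<^sup>2 + 2 * (cmod (v n))\<^sup>2" for n
    using norm_triangle_ineq[of "u n" "v n"] zero_le_power2[of "cmod (u n) - cmod (v n)"]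
    by (smt (verit) norm_ge_zero power2_diff power2_sum power_mono)
  moreover have "summable (\<lambda>n. 2 * (cmod (u n))\<^sup>2 + 2 * (cmod (v n))\<^sup>2)"
    using assms by (intro summable_add summable_mult l2_summable)
  ultimately show ?thesis
    unfolding l2_def by (auto intro: summable_comparison_test'[where N = 0])
qed

lemma l2_uminus: "u \<in> l2 \<Longrightarrow> (\<lambda>n. - u n) \<in> l2"
  by (simp add: l2_def)

lemma l2_diff: "u \<in> l2 \<Longrightarrow> v \<in> l2 \<Longrightarrow> (\<lambda>n. u n - v n) \<in> l2"
  using l2_add[OF _ l2_uminus] by simp

lemma summable_l2_inner:
  assumes "u \<in> l2" "v \<in> l2"
  shows "summable (\<lambda>n. u n * cnj (v n))"
proof (rule summable_norm_cancel, rule summable_comparison_test')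
  show "norm (norm (u n * cnj (v n))) \<le> ((cmod (u n))\<^sup>2 + (cmod (v n))\<^sup>2) / 2" for n
    using sum_squares_bound[of "cmod (u n)" "cmod (v n)"] by (simp add: norm_mult)
  show "summable (\<lambda>n. ((cmod (u n))\<^sup>2 + (cmod (v n))\<^sup>2) / 2)"
    using assms by (intro summable_divide summable_add l2_summable)
qed

lemma l2_pythagoras:
  assumes u: "u \<in> l2" and v: "v \<in> l2" and orth: "l2_inner u v = 0"
  shows "(\<Sum>n. (cmod (u n + v n))\<^sup>2) = (\<Sum>n. (cmod (u n))\<^sup>2) + (\<Sum>n. (cmod (v n))\<^sup>2)"
proof -
  have uv: "summable (\<lambda>n. u n * cnj (v n))" by (rule summable_l2_inner[OF u v])
  define r where "r n = 2 * Re (u n * cnj (v n))" for n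
  have r: "summable r"
    unfolding r_def by (rule summable_mult[OF summable_Re[OF uv]])
  have "(\<Sum>n. r n) = 2 * (\<Sum>n. Re (u n * cnj (v n)))"
    unfolding r_def by (rule suminf_mult[OF summable_Re[OF uv]])
  also have "\<dots> = 2 * Re (l2_inner u v)"
    unfolding l2_inner_def by (subst bounded_linear.suminf[OF bounded_linear_Re uv]) (rule refl)
  finally have r0: "(\<Sum>n. r n) = 0"
    using orth by simp
  have "(cmod (u n + v n))\<^sup>2 = (cmod (u n))\<^sup>2 + (cmod (v n))\<^sup>2 + r n" for n
    unfolding cmod_power2 r_def by (simp add: power2_eq_square algebra_simps)
  hence "(\<Sum>n. (cmod (u n + v n))\<^sup>2) = (\<Sum>n. (cmod (u n))\<^sup>2) + (\<Sum>n. (cmod (v n))\<^sup>2) + (\<Sum>n. r n)"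
    using l2_summable[OF u] l2_summable[OF v] r by (simp add: suminf_add summable_add)
  thus ?thesis using r0 by simp
qed

lemma l2_closure_superset: "S \<subseteq> l2 \<Longrightarrow> S \<subseteq> l2_closure S"
  unfolding l2_closure_def l2_norm_def by force

lemma l2_closure_orth_eq_0:
  assumes "S \<subseteq> l2" and d: "d \<in> l2_closure S" and orth: "\<And>c. c \<in> S \<Longrightarrow> l2_inner c d = 0"
  shows "d = (\<lambda>n. 0)"
proof -
  have dl2: "d \<in> l2" using d by (simp add: l2_closure_def)
  have "(\<Sum>n. (cmod (d n))\<^sup>2) \<le> 0 + e" if "e > 0" for e
  proof -
    obtain c where c: "c \<in> S" "l2_norm (\<lambda>n. c n - d n) < sqrt e"
      using d real_sqrt_gt_zero[OF \<open>e > 0\<close>] unfolding l2_closure_def by blast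
    have cl2: "c \<in> l2" using c(1) assms(1) by blast
    have "l2_inner c (\<lambda>n. - d n) = 0"
      using orth[OF c(1)] suminf_minus[OF summable_l2_inner[OF cl2 dl2]] by (simp add: l2_inner_def)
    hence pyth: "(\<Sum>n. (cmod (c n - d n))\<^sup>2) = (\<Sum>n. (cmod (c n))\<^sup>2) + (\<Sum>n. (cmod (d n))\<^sup>2)"
      using l2_pythagoras[OF cl2 l2_uminus[OF dl2]] by simp
    have cd_nonneg: "(\<Sum>n. (cmod (c n - d n))\<^sup>2) \<ge> 0"
      using suminf_nonneg[OF l2_summable[OF l2_diff[OF cl2 dl2]]] by simp
    have "(\<Sum>n. (cmod (d n))\<^sup>2) \<le> (\<Sum>n. (cmod (c n - d n))\<^sup>2)"
      using pyth suminf_nonneg[OF l2_summable[OF cl2]] by simp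
    also have "\<dots> = (l2_norm (\<lambda>n. c n - d n))\<^sup>2"
      using cd_nonneg by (simp add: l2_norm_def)
    also have "\<dots> \<le> (sqrt e)\<^sup>2"
      using c(2) cd_nonneg by (intro power_mono) (auto simp: l2_norm_def)
    also have "\<dots> = e"
      using \<open>e > 0\<close> by simp
    finally show ?thesis by simp
  qed
  hence "(\<Sum>n. (cmod (d n))\<^sup>2) \<le> 0"
    by (rule field_le_epsilon)
  thus ?thesis
    using suminf_eq_zero_iff[OF l2_summable[OF dl2]] suminf_nonneg[OF l2_summable[OF dl2]]
    by (simp add: fun_eq_iff)
qed

definition bessel_bound :: "('a::real_inner \<Rightarrow> 'a) \<Rightarrow> (nat \<Rightarrow> 'a) \<Rightarrow> real \<Rightarrow> bool" where
  "bessel_bound J z B \<longleftrightarrow> B > 0 \<and> (\<forall>v. summable (\<lambda>n. (cmod (cinner J v (z n)))\<^sup>2) \<and>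
     (\<Sum>n. (cmod (cinner J v (z n)))\<^sup>2) \<le> B * (norm v)\<^sup>2)"

lemma kframe_imp_bessel_bound: "kframe J K z \<Longrightarrow> \<exists>B. bessel_bound J z B"
  unfolding kframe_def bessel_bound_def by blast

lemma analysis_op_in_l2: "bessel_bound J z B \<Longrightarrow> analysis_op J z v \<in> l2"
  by (simp add: bessel_bound_def analysis_op_def l2_def)

lemma norm_sum_cscale_le:
  assumes J: "cstruct J" and B: "bessel_bound J z B" and F: "finite F"
  shows "norm (\<Sum>n\<in>F. cscale J (a n) (z n)) \<le> sqrt B * sqrt (\<Sum>n\<in>F. (cmod (a n))\<^sup>2)"
proof -
  define s where "s = (\<Sum>n\<in>F. cscale J (a n) (z n))"
  define w where "w n = cinner J s (z n)" for n
  have "L2_set (\<lambda>n. cmod (w n)) F \<le> sqrt B * norm s"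
  proof -
    have "(\<Sum>n\<in>F. (cmod (w n))\<^sup>2) \<le> (\<Sum>n. (cmod (w n))\<^sup>2)"
      using B F by (intro sum_le_suminf) (auto simp: w_def bessel_bound_def)
    also have "\<dots> \<le> B * (norm s)\<^sup>2"
      using B by (simp add: w_def bessel_bound_def)
    finally have "sqrt (\<Sum>n\<in>F. (cmod (w n))\<^sup>2) \<le> sqrt (B * (norm s)\<^sup>2)"
      by (rule real_sqrt_le_mono)
    thus ?thesis by (simp add: L2_set_def real_sqrt_mult)
  qed
  have "(norm s)\<^sup>2 = (\<Sum>n\<in>F. inner (cscale J (a n) (z n)) s)"
    unfolding power2_norm_eq_inner by (subst (1) s_def) (rule inner_sum_left)
  also have "\<dots> = (\<Sum>n\<in>F. Re (a n * cnj (w n)))"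
    by (simp add: inner_cscale_left[OF J] w_def)
  also have "\<dots> \<le> (\<Sum>n\<in>F. cmod (a n) * cmod (w n))"
    by (rule sum_mono) (metis complex_Re_le_cmod complex_mod_cnj norm_mult)
  also have "\<dots> \<le> L2_set (\<lambda>n. cmod (a n)) F * L2_set (\<lambda>n. cmod (w n)) F"
    using L2_set_mult_ineq[of "\<lambda>n. cmod (a n)" "\<lambda>n. cmod (w n)" F] by simp
  also have "\<dots> \<le> L2_set (\<lambda>n. cmod (a n)) F * (sqrt B * norm s)"
    by (intro mult_left_mono \<open>L2_set _ F \<le> _\<close> L2_set_nonneg)
  finally have "norm s * norm s \<le> (sqrt (\<Sum>n\<in>F. (cmod (a n))\<^sup>2) * sqrt B) * norm s"
    by (simp add: L2_set_def power2_eq_square mult_ac)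
  hence "norm s \<le> sqrt B * sqrt (\<Sum>n\<in>F. (cmod (a n))\<^sup>2)"
    using B by (cases "norm s = 0") (auto simp: bessel_bound_def mult.commute sum_nonneg)
  thus ?thesis by (simp add: s_def)
qed

(* The library's summable_Cauchy needs class banach, which the sort {real_inner, complete_space}
   does not instantiate. *)
lemma summable_CauchyI:
  fixes f :: "nat \<Rightarrow> 'a::{real_normed_vector, complete_space}"
  assumes "\<And>e. e > 0 \<Longrightarrow> \<exists>N. \<forall>m\<ge>N. \<forall>n. norm (\<Sum>i\<in>{m..<n}. f i) < e"
  shows "summable f"
proof -
  have "Cauchy (\<lambda>n. \<Sum>i<n. f i)"
  proof (rule CauchyI)
    fix e :: real assume "e > 0"
    then obtain N where N: "\<And>m n. N \<le> m \<Longrightarrow> norm (\<Sum>i\<in>{m..<n}. f i) < e"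
      using assms by blast
    have "norm ((\<Sum>i<m. f i) - (\<Sum>i<n. f i)) < e" if "N \<le> m" "N \<le> n" for m n
    proof (cases "m \<le> n")
      case True
      hence "(\<Sum>i<n. f i) - (\<Sum>i<m. f i) = (\<Sum>i\<in>{m..<n}. f i)"
        by (simp add: lessThan_atLeast0 sum_diff_nat_ivl)
      thus ?thesis using N[OF that(1), of n] by (metis norm_minus_commute)
    next
      case False
      hence "(\<Sum>i<m. f i) - (\<Sum>i<n. f i) = (\<Sum>i\<in>{n..<m}. f i)"
        by (simp add: lessThan_atLeast0 sum_diff_nat_ivl)
      thus ?thesis using N[OF that(2), of m] by simp
    qed
    thus "\<exists>M. \<forall>m\<ge>M. \<forall>n\<ge>M. norm ((\<Sum>i<m. f i) - (\<Sum>i<n. f i)) < e" by blast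
  qed
  thus ?thesis by (simp add: summable_iff_convergent Cauchy_convergent_iff)
qed

lemma summable_synthesis:
  assumes J: "cstruct J" and B: "bessel_bound J (z :: nat \<Rightarrow> 'a::{real_inner, complete_space}) B"
    and a: "a \<in> l2"
  shows "summable (\<lambda>n. cscale J (a n) (z n))"
proof (rule summable_CauchyI)
  fix e :: real assume "e > 0"
  have "B > 0" using B by (simp add: bessel_bound_def)
  then obtain N where N: "\<And>m n. N \<le> m \<Longrightarrow> norm (\<Sum>i\<in>{m..<n}. (cmod (a i))\<^sup>2) < e\<^sup>2 / B"
    using l2_summable[OF a, unfolded summable_Cauchy] \<open>e > 0\<close> by (meson divide_pos_pos zero_less_power)
  have "norm (\<Sum>i\<in>{m..<n}. cscale J (a i) (z i)) < e" if "N \<le> m" for m n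
  proof -
    have "norm (\<Sum>i\<in>{m..<n}. cscale J (a i) (z i)) \<le> sqrt B * sqrt (\<Sum>i\<in>{m..<n}. (cmod (a i))\<^sup>2)"
      by (rule norm_sum_cscale_le[OF J B]) simp
    also have "\<dots> < sqrt B * sqrt (e\<^sup>2 / B)"
      using N[OF that, of n] \<open>B > 0\<close> by (simp add: sum_nonneg)
    also have "\<dots> = e"
      using \<open>B > 0\<close> \<open>e > 0\<close> by (simp add: real_sqrt_mult[symmetric])
    finally show ?thesis .
  qed
  thus "\<exists>N. \<forall>m\<ge>N. \<forall>n. norm (\<Sum>i\<in>{m..<n}. cscale J (a i) (z i)) < e" by blast
qed

lemma synthesis_op_diff:
  assumes "cstruct J" "bessel_bound J (z :: nat \<Rightarrow> 'a::{real_inner, complete_space}) B"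
    and "a \<in> l2" "b \<in> l2"
  shows "synthesis_op J z (\<lambda>n. a n - b n) = synthesis_op J z a - synthesis_op J z b"
  unfolding synthesis_op_def cscale_diff_left
  by (rule suminf_diff[symmetric]; rule summable_synthesis[OF assms(1,2)]; fact)

lemma l2_inner_analysis_op:
  assumes J: "cstruct J" and B: "bessel_bound J (z :: nat \<Rightarrow> 'a::{real_inner, complete_space}) B"
    and a: "a \<in> l2"
  shows "l2_inner (analysis_op J z p) a = cinner J p (synthesis_op J z a)"
proof -
  have za: "summable (\<lambda>n. cinner J q (z n) * cnj (a n))" for q
    using summable_l2_inner[OF analysis_op_in_l2[OF B] a] by (simp add: analysis_op_def)
  have re: "Re (l2_inner (analysis_op J z q) a) = inner q (synthesis_op J z a)" for q
  proof -
    have "Re (l2_inner (analysis_op J z q) a) = (\<Sum>n. Re (cinner J q (z n) * cnj (a n)))"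
      unfolding l2_inner_def analysis_op_def by (rule bounded_linear.suminf[OF bounded_linear_Re za])
    also have "\<dots> = (\<Sum>n. inner (cscale J (a n) (z n)) q)"
      by (simp add: inner_cscale_left[OF J] mult.commute)
    also have "\<dots> = inner (synthesis_op J z a) q"
      unfolding synthesis_op_def
      by (rule bounded_linear.suminf[OF bounded_linear_inner_left summable_synthesis[OF J B a], symmetric])
    finally show ?thesis by (simp add: inner_commute)
  qed
  have "l2_inner (analysis_op J z (J p)) a = \<i> * l2_inner (analysis_op J z p) a"
    unfolding l2_inner_def analysis_op_def cinner_cstruct_left[OF J]
    by (simp add: mult.assoc suminf_mult[OF za])
  thus ?thesis
    using re[of p] re[of "J p"] by (simp add: cinner_def complex_eq_iff)
qed

lemma sums_Pair:
  assumes "f sums s" "g sums t"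
  shows "(\<lambda>n. (f n, g n)) sums (s, t)"
proof -
  have "(\<Sum>i<n. (f i, g i)) = (\<Sum>i<n. f i, \<Sum>i<n. g i)" for n
    by (simp add: prod_eq_iff fst_sum snd_sum)
  thus ?thesis using assms unfolding sums_def by (simp add: tendsto_Pair)
qed

lemma analysis_op_dsum_op:
  "analysis_op (dsum_op J1 J2) (\<lambda>n. (x n, y n)) (p, q) = (\<lambda>n. analysis_op J1 x p n + analysis_op J2 y q n)"
  by (simp add: analysis_op_def cinner_dsum_op)

lemma synthesis_op_dsum_op:
  assumes "summable (\<lambda>n. cscale J1 (a n) (x n))" "summable (\<lambda>n. cscale J2 (a n) (y n))"
  shows "synthesis_op (dsum_op J1 J2) (\<lambda>n. (x n, y n)) a = (synthesis_op J1 x a, synthesis_op J2 y a)"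
proof -
  have "(\<lambda>n. cscale (dsum_op J1 J2) (a n) (x n, y n)) = (\<lambda>n. (cscale J1 (a n) (x n), cscale J2 (a n) (y n)))"
    by (simp add: cscale_def dsum_op_def)
  thus ?thesis
    using sums_Pair[OF summable_sums summable_sums, OF assms] by (simp add: synthesis_op_def sums_iff)
qed

lemma analysis_op_dsum_op_pythagoras:
  assumes "analysis_op J1 x p \<in> l2" "analysis_op J2 y q \<in> l2"
    and "l2_inner (analysis_op J2 y q) (analysis_op J1 x p) = 0"
  shows "analysis_op (dsum_op J1 J2) (\<lambda>n. (x n, y n)) (p, q) \<in> l2"
    and "(\<Sum>n. (cmod (analysis_op (dsum_op J1 J2) (\<lambda>n. (x n, y n)) (p, q) n))\<^sup>2)
         = (\<Sum>n. (cmod (analysis_op J1 x p n))\<^sup>2) + (\<Sum>n. (cmod (analysis_op J2 y q n))\<^sup>2)"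
  using l2_add[OF assms(2,1)] l2_pythagoras[OF assms(2,1,3)]
  by (simp_all add: analysis_op_dsum_op add.commute)

lemma norm_hadj_dsum_op_power2:
  fixes J1 K :: "'a::{real_inner, complete_space} \<Rightarrow> 'a"
    and J2 L :: "'b::{real_inner, complete_space} \<Rightarrow> 'b"
  assumes "cbounded J1 K" "cbounded J2 L"
  shows "(norm (hadj (dsum_op J1 J2) (dsum_op K L) (p, q)))\<^sup>2
         = (norm (hadj J1 K p))\<^sup>2 + (norm (hadj J2 L q))\<^sup>2"
  unfolding hadj_dsum_op[OF assms] by (simp add: dsum_op_def norm_Pair)

lemma kframe_dsum_op:
  fixes J1 K :: "'a::{real_inner, complete_space} \<Rightarrow> 'a"
    and J2 L :: "'b::{real_inner, complete_space} \<Rightarrow> 'b"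
  assumes KL: "cbounded J1 K" "cbounded J2 L" and "kframe J1 K x" "kframe J2 L y"
    and orth: "range (analysis_op J1 x) \<subseteq> l2_orth (range (analysis_op J2 y))"
  shows "kframe (dsum_op J1 J2) (dsum_op K L) (\<lambda>n. (x n, y n))"
proof -
  obtain A1 B1 where AB1: "A1 > 0" "B1 > 0" and
    F1: "\<And>p. analysis_op J1 x p \<in> l2 \<and>
          A1 * (norm (hadj J1 K p))\<^sup>2 \<le> (\<Sum>n. (cmod (analysis_op J1 x p n))\<^sup>2) \<and>
          (\<Sum>n. (cmod (analysis_op J1 x p n))\<^sup>2) \<le> B1 * (norm p)\<^sup>2"
    using \<open>kframe J1 K x\<close> unfolding kframe_def by (simp add: l2_def analysis_op_def) blast
  obtain A2 B2 where AB2: "A2 > 0" "B2 > 0" and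
    F2: "\<And>q. analysis_op J2 y q \<in> l2 \<and>
          A2 * (norm (hadj J2 L q))\<^sup>2 \<le> (\<Sum>n. (cmod (analysis_op J2 y q n))\<^sup>2) \<and>
          (\<Sum>n. (cmod (analysis_op J2 y q n))\<^sup>2) \<le> B2 * (norm q)\<^sup>2"
    using \<open>kframe J2 L y\<close> unfolding kframe_def by (simp add: l2_def analysis_op_def) blast
  let ?\<theta> = "analysis_op (dsum_op J1 J2) (\<lambda>n. (x n, y n))"
  have bounds: "?\<theta> z \<in> l2 \<and>
      min A1 A2 * (norm (hadj (dsum_op J1 J2) (dsum_op K L) z))\<^sup>2 \<le> (\<Sum>n. (cmod (?\<theta> z n))\<^sup>2) \<and>
      (\<Sum>n. (cmod (?\<theta> z n))\<^sup>2) \<le> max B1 B2 * (norm z)\<^sup>2" for z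
  proof (cases z)
    case (Pair p q)
    have "l2_inner (analysis_op J2 y q) (analysis_op J1 x p) = 0"
      using orth by (auto simp: l2_orth_def)
    note \<theta> = analysis_op_dsum_op_pythagoras[OF conjunct1[OF F1] conjunct1[OF F2] this]
    have "min A1 A2 * (norm (hadj (dsum_op J1 J2) (dsum_op K L) z))\<^sup>2
        \<le> A1 * (norm (hadj J1 K p))\<^sup>2 + A2 * (norm (hadj J2 L q))\<^sup>2"
      unfolding Pair norm_hadj_dsum_op_power2[OF KL] distrib_left
      by (intro add_mono mult_right_mono) auto
    moreover have "B1 * (norm p)\<^sup>2 + B2 * (norm q)\<^sup>2 \<le> max B1 B2 * (norm z)\<^sup>2"
      unfolding Pair norm_Pair by (simp add: distrib_left add_mono mult_right_mono)
    ultimately show ?thesis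
      using F1[of p] F2[of q] \<theta> by (simp add: Pair)
  qed
  show ?thesis
    unfolding kframe_def
    by (rule exI[of _ "min A1 A2"], rule exI[of _ "max B1 B2"])
      (use bounds AB1 AB2 in \<open>auto simp: l2_def analysis_op_def\<close>)
qed

lemma inj_on_synthesis_op_dsum_op:
  fixes x :: "nat \<Rightarrow> 'a::{real_inner, complete_space}" and y :: "nat \<Rightarrow> 'b::{real_inner, complete_space}"
  assumes J: "cstruct J1" "cstruct J2" and B: "bessel_bound J1 x B1" "bessel_bound J2 y B2"
    and dense: "l2_orth (range (analysis_op J2 y)) \<subseteq> l2_closure (range (analysis_op J1 x))"
  shows "inj_on (synthesis_op (dsum_op J1 J2) (\<lambda>n. (x n, y n))) l2"
proof (rule inj_onI)
  fix a b assume ab: "a \<in> l2" "b \<in> l2"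
    and eq: "synthesis_op (dsum_op J1 J2) (\<lambda>n. (x n, y n)) a = synthesis_op (dsum_op J1 J2) (\<lambda>n. (x n, y n)) b"
  have "synthesis_op (dsum_op J1 J2) (\<lambda>n. (x n, y n)) c = (synthesis_op J1 x c, synthesis_op J2 y c)"
    if "c \<in> l2" for c
    using summable_synthesis[OF J(1) B(1) that] summable_synthesis[OF J(2) B(2) that]
    by (rule synthesis_op_dsum_op)
  hence "synthesis_op J1 x a = synthesis_op J1 x b" "synthesis_op J2 y a = synthesis_op J2 y b"
    using eq ab by auto
  define d where "d = (\<lambda>n. a n - b n)"
  have d: "d \<in> l2" unfolding d_def by (rule l2_diff[OF ab])
  have "synthesis_op J1 x d = 0" "synthesis_op J2 y d = 0"
    unfolding d_def synthesis_op_diff[OF J(1) B(1) ab] synthesis_op_diff[OF J(2) B(2) ab]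
    by (simp_all add: \<open>synthesis_op J1 x a = _\<close> \<open>synthesis_op J2 y a = _\<close>)
  hence orth1: "l2_inner (analysis_op J1 x p) d = 0" and orth2: "l2_inner (analysis_op J2 y q) d = 0" for p q
    using l2_inner_analysis_op[OF J(1) B(1) d, of p] l2_inner_analysis_op[OF J(2) B(2) d, of q]
    by (simp_all add: cinner_def complex_eq_iff)
  have "d \<in> l2_closure (range (analysis_op J1 x))"
    using dense d orth2 by (auto simp: l2_orth_def)
  hence "d = (\<lambda>n. 0)"
    using analysis_op_in_l2[OF B(1)] orth1 by (intro l2_closure_orth_eq_0) auto
  thus "a = b" by (simp add: d_def fun_eq_iff)
qed

theorem proposition2p20:
  fixes J1 K :: "'a::{real_inner, complete_space} \<Rightarrow> 'a"
    and J2 L :: "'b::{real_inner, complete_space} \<Rightarrow> 'b"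
    and x :: "nat \<Rightarrow> 'a" and y :: "nat \<Rightarrow> 'b"
  assumes "cstruct J1" and "cstruct J2"
    and "separable_space (euclidean :: 'a topology)"
    and "separable_space (euclidean :: 'b topology)"
    and "cbounded J1 K" and "cbounded J2 L"
    and "kframe J1 K x" and "kframe J2 L y"
    and "l2_closure (range (analysis_op J1 x)) = l2_orth (range (analysis_op J2 y))"
  shows "kminimal (dsum_op J1 J2) (dsum_op K L) (\<lambda>n. (x n, y n))"
proof -
  obtain B1 B2 where B: "bessel_bound J1 x B1" "bessel_bound J2 y B2"
    using kframe_imp_bessel_bound assms(7,8) by metis
  have "range (analysis_op J1 x) \<subseteq> l2_orth (range (analysis_op J2 y))"
    using l2_closure_superset[of "range (analysis_op J1 x)"] analysis_op_in_l2[OF B(1)] assms(9) by auto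
  hence "kframe (dsum_op J1 J2) (dsum_op K L) (\<lambda>n. (x n, y n))"
    using assms(5-8) by (rule kframe_dsum_op[rotated 4])
  moreover have "inj_on (synthesis_op (dsum_op J1 J2) (\<lambda>n. (x n, y n))) l2"
    using assms(1,2,9) B by (intro inj_on_synthesis_op_dsum_op) auto
  ultimately show ?thesis by (simp add: kminimal_def)
qed

end
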